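(* Let $N\ge1$ and let $\xi_1<\dots<\xi_{N+1}$ be nodes in $[-1,1]$ with positive weights $w_1,\dots,w_{N+1}$ such that $\sum_i w_if(\xi_i)=\int_{-1}^1f\,d\xi$ for every polynomial $f$ of degree $\le 2N-1$ (e.g. Gauss–Lobatto–Legendre or Gauss–Legendre nodes). Let $\mathcal L_1,\dots,\mathcal L_{N+1}$ be the Lagrange polynomials of degree $N$ with $\mathcal L_j(\xi_i)=\delta_{ij}$. Define $(N+1)\times(N+1)$ matrices $W^N(a)=\mathrm{diag}(w_ja_j)$ for a vector $a=(a_j)$ of nodal values, $Q^N_{ij}=\sum_m w_m\mathcal L_i(\xi_m)\mathcal L_j'(\xi_m)$, and vectors $\boldsymbol e_1=(\mathcal L_j(-1))_j$, $\boldsymbol e_{N+1}=(\mathcal L_j(1))_j$. Partition $[0,L]$ into elements $[x_k,x_{k+1}]$, $k=1,\dots,K$, with $\Delta x_k=x_{k+1}-x_k>0$. On element $k$ let $\rho^k(\xi)=\sum_j\rho^k_j\mathcal L_j(\xi)$, $\mu^k(\xi)=\sum_j\mu^k_j\mathcal L_j(\xi)$ with $\rho^k_j,\mu^k_j>0$ and $\rho^k(\pm1),\mu^k(\pm1)>0$, and set $Z_s^k(\pm1)=\sqrt{\rho^k(\pm1)\mu^k(\pm1)}$. For unknowns $\boldsymbol v^k(t),\boldsymbol\sigma^k(t)\in\mathbb R^{N+1}$ let $v^k(\xi,t)=\sum_jv^k_j(t)\mathcal L_j(\xi)$, $\sigma^k(\xi,t)=\sum_j\sigma^k_j(t)\mathcal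 L_j(\xi)$. Fix $r_0,r_L\in[-1,1]$ and, for each interior interface between elements $k-1$ and $k$ ($2\le k\le K$), $\alpha^k\in[0,\infty]$. Define hat-variables: (i) left boundary of element $1$: $p_0=\frac12(Z_s^1(-1)v^1(-1,t)+\sigma^1(-1,t))$, $\widehat v^1(-1)=\frac{1+r_0}{Z_s^1(-1)}p_0$, $\widehat\sigma^1(-1)=(1-r_0)p_0$; (ii) right boundary of element $K$: $q_L=\frac12(Z_s^K(1)v^K(1,t)-\sigma^K(1,t))$, $\widehat v^K(1)=\frac{1+r_L}{Z_s^K(1)}q_L$, $\widehat\sigma^K(1)=-(1-r_L)q_L$; (iii) interface between elements $k-1$ and $k$: with $Z^-=Z_s^{k-1}(1)$, $Z^+=Z_s^k(-1)$, $q^-=\frac12(Z^-v^{k-1}(1,t)-\sigma^{k-1}(1,t))$, $p^+=\frac12(Z^+v^k(-1,t)+\sigma^k(-1,t))$, $\eta^k=\frac{Z^-Z^+}{Z^-+Z^+}$, $\Phi^k=\eta^k(\frac2{Z^+}p^+-\frac2{Z^-}q^-)$, set $\widehat\sigma^k=\frac{\alpha^k}{\eta^k+\alpha^k}\Phi^k$ ($=\Phi^k$ if $\alpha^k=\infty$), $\widehat\sigma^{k-1}(1)=\widehat\sigma^k(-1)=\widehat\sigma^k$, $\widehat v^{k-1}(1)=\frac{2q^-+\widehat\sigma^k}{Z^-}$, $\widehat v^k(-1)=\frac{2p^+-\widehat\sigma^k}{Z^+}$. Let $F^k(-1,t)=\frac{Z_s^k(-1)}{2}(v^k(-1,t)-\widehat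 v^k(-1))-\frac12(\sigma^k(-1,t)-\widehat\sigma^k(-1))$ and $G^k(1,t)=\frac{Z_s^k(1)}{2}(v^k(1,t)-\widehat v^k(1))+\frac12(\sigma^k(1,t)-\widehat\sigma^k(1))$. Suppose $(\boldsymbol v^k,\boldsymbol\sigma^k)_{k=1}^K$ are differentiable and satisfy, for all $k$, $$\frac{\Delta x_k}{2}W^N(\rho^k)\frac{d\boldsymbol v^k}{dt}=Q^N\boldsymbol\sigma^k-\boldsymbol e_1F^k(-1,t)-\boldsymbol e_{N+1}G^k(1,t),$$ $$\frac{\Delta x_k}{2}W^N(1/\mu^k)\frac{d\boldsymbol\sigma^k}{dt}=Q^N\boldsymbol v^k+\boldsymbol e_1\frac{F^k(-1,t)}{Z_s^k(-1)}-\boldsymbol e_{N+1}\frac{G^k(1,t)}{Z_s^k(1)},$$ where $W^N(\rho^k)=\mathrm{diag}(w_j\rho^k_j)$ and $W^N(1/\mu^k)=\mathrm{diag}(w_j/\mu^k_j)$. Define $\mathcal E(t)=\sum_{k=1}^K\frac{\Delta x_k}{2}\sum_{j=1}^{N+1}\frac{w_j}{2}\big(\rho^k_j|v^k_j|^2+\frac{1}{\mu^k_j}|\sigma^k_j|^2\big)$. Then $$\frac{d\mathcal E}{dt}=-\sum_{k=1}^K\Big(\frac{|F^k(-1,t)|^2}{Z_s^k(-1)}+\frac{|G^k(1,t)|^2}{Z_s^k(1)}\Big)-\sum_{k=2}^K\frac{\alpha^k}{(\eta^k+\alpha^k)^2}|\Phi^k|^2-\frac{1-r_0^2}{Z_s^1(-1)}p_0^2-\frac{1-r_L^2}{Z_s^K(1)}q_L^2,$$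 where the $k$-th friction term is $0$ when $\alpha^k=\infty$. In particular $\frac{d\mathcal E}{dt}\le0$ for every mesh (asymptotic stability).
   Context: This is the nodal discontinuous Galerkin semi-discretization of the 1D elastic wave equation $\rho\partial_tv=\partial_x\sigma$, $\frac1\mu\partial_t\sigma=\partial_xv$ on $[0,L]$, each element mapped to $[-1,1]$ by $x=x_k+\frac{\Delta x_k}{2}(1+\xi)$. Element faces are coupled through frictional interface conditions (force balance plus $\widehat\sigma=\alpha[\![\widehat v]\!]$, $\alpha=\infty$ meaning a locked interface) and the external boundaries through $\frac{Z_s}{2}(1-r)v\mp\frac{1+r}{2}\sigma=0$ with reflection coefficients $r_0$ (at $x=0$) and $r_L$ (at $x=L$). The hat-variables are computed from the polynomial traces at $\xi=\pm1$. *)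

theory Defs
  imports "HOL-Analysis.Analysis" "HOL-Computational_Algebra.Polynomial"
begin

text \<open>Nodes are indexed 0..N (the paper uses 1..N+1); elements are indexed 1..K.
  V, S :: nat => nat => real denote the nodal values v^k_j(t), sigma^k_j(t) at a fixed time.\<close>

definition lagrange :: "(nat \<Rightarrow> real) \<Rightarrow> nat \<Rightarrow> nat \<Rightarrow> real poly" where
  "lagrange \<xi> N j = (\<Prod>m\<in>{0..N} - {j}. smult (inverse (\<xi> j - \<xi> m)) [:- \<xi> m, 1:])"

definition nodal_eval :: "(nat \<Rightarrow> real) \<Rightarrow> nat \<Rightarrow> (nat \<Rightarrow> real) \<Rightarrow> real \<Rightarrow> real" where
  "nodal_eval \<xi> N a s = (\<Sum>j\<le>N. a j * poly (lagrange \<xi> N j) s)"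

definition Qmat :: "(nat \<Rightarrow> real) \<Rightarrow> (nat \<Rightarrow> real) \<Rightarrow> nat \<Rightarrow> nat \<Rightarrow> nat \<Rightarrow> real" where
  "Qmat \<xi> w N i j = (\<Sum>m\<le>N. w m * poly (lagrange \<xi> N i) (\<xi> m)
                         * poly (pderiv (lagrange \<xi> N j)) (\<xi> m))"

definition Zs :: "(nat \<Rightarrow> real) \<Rightarrow> nat \<Rightarrow> (nat \<Rightarrow> nat \<Rightarrow> real) \<Rightarrow> (nat \<Rightarrow> nat \<Rightarrow> real)
                  \<Rightarrow> nat \<Rightarrow> real \<Rightarrow> real" where
  "Zs \<xi> N rho mu k s = sqrt (nodal_eval \<xi> N (rho k) s * nodal_eval \<xi> N (mu k) s)"

definition p0 where
  "p0 \<xi> N rho mu V S = (Zs \<xi> N rho mu 1 (-1) * nodal_eval \<xi> N (V 1) (-1) + nodal_eval \<xi> N (S 1) (-1)) / 2"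

definition qL where
  "qL \<xi> N rho mu K V S = (Zs \<xi> N rho mu K 1 * nodal_eval \<xi> N (V K) 1 - nodal_eval \<xi> N (S K) 1) / 2"

definition qm where
  "qm \<xi> N rho mu V S k = (Zs \<xi> N rho mu (k-1) 1 * nodal_eval \<xi> N (V (k-1)) 1 - nodal_eval \<xi> N (S (k-1)) 1) / 2"

definition pp where
  "pp \<xi> N rho mu V S k = (Zs \<xi> N rho mu k (-1) * nodal_eval \<xi> N (V k) (-1) + nodal_eval \<xi> N (S k) (-1)) / 2"

definition eta where
  "eta \<xi> N rho mu k = Zs \<xi> N rho mu (k-1) 1 * Zs \<xi> N rho mu k (-1)
                      / (Zs \<xi> N rho mu (k-1) 1 + Zs \<xi> N rho mu k (-1))"

definition Phi where
  "Phi \<xi> N rho mu V S k = eta \<xi> N rho mu k *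
     (2 / Zs \<xi> N rho mu k (-1) * pp \<xi> N rho mu V S k - 2 / Zs \<xi> N rho mu (k-1) 1 * qm \<xi> N rho mu V S k)"

text \<open>Interface traction hat-sigma^k; alpha^k = infinity means a locked interface.\<close>
definition sig_hat_if :: "(nat \<Rightarrow> real) \<Rightarrow> nat \<Rightarrow> (nat \<Rightarrow> nat \<Rightarrow> real) \<Rightarrow> (nat \<Rightarrow> nat \<Rightarrow> real)
     \<Rightarrow> (nat \<Rightarrow> ereal) \<Rightarrow> (nat \<Rightarrow> nat \<Rightarrow> real) \<Rightarrow> (nat \<Rightarrow> nat \<Rightarrow> real) \<Rightarrow> nat \<Rightarrow> real" where
  "sig_hat_if \<xi> N rho mu \<alpha> V S k =
     (if \<alpha> k = \<infinity> then Phi \<xi> N rho mu V S k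
      else real_of_ereal (\<alpha> k) / (eta \<xi> N rho mu k + real_of_ereal (\<alpha> k)) * Phi \<xi> N rho mu V S k)"

definition v_hat_left where
  "v_hat_left \<xi> N rho mu \<alpha> r0 V S k =
     (if k = 1 then (1 + r0) / Zs \<xi> N rho mu 1 (-1) * p0 \<xi> N rho mu V S
      else (2 * pp \<xi> N rho mu V S k - sig_hat_if \<xi> N rho mu \<alpha> V S k) / Zs \<xi> N rho mu k (-1))"

definition s_hat_left where
  "s_hat_left \<xi> N rho mu \<alpha> r0 V S k =
     (if k = 1 then (1 - r0) * p0 \<xi> N rho mu V S else sig_hat_if \<xi> N rho mu \<alpha> V S k)"

definition v_hat_right where
  "v_hat_right \<xi> N rho mu \<alpha> K rL V S k =
     (if k = K then (1 + rL) / Zs \<xi> N rho mu K 1 * qL \<xi> N rho mu K V S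
      else (2 * qm \<xi> N rho mu V S (k+1) + sig_hat_if \<xi> N rho mu \<alpha> V S (k+1)) / Zs \<xi> N rho mu k 1)"

definition s_hat_right where
  "s_hat_right \<xi> N rho mu \<alpha> K rL V S k =
     (if k = K then - (1 - rL) * qL \<xi> N rho mu K V S else sig_hat_if \<xi> N rho mu \<alpha> V S (k+1))"

definition Fpen where
  "Fpen \<xi> N rho mu \<alpha> r0 V S k =
     Zs \<xi> N rho mu k (-1) / 2 * (nodal_eval \<xi> N (V k) (-1) - v_hat_left \<xi> N rho mu \<alpha> r0 V S k)
     - (nodal_eval \<xi> N (S k) (-1) - s_hat_left \<xi> N rho mu \<alpha> r0 V S k) / 2"

definition Gpen where
  "Gpen \<xi> N rho mu \<alpha> K rL V S k =
     Zs \<xi> N rho mu k 1 / 2 * (nodal_eval \<xi> N (V k) 1 - v_hat_right \<xi> N rho mu \<alpha> K rL V S k)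
     + (nodal_eval \<xi> N (S k) 1 - s_hat_right \<xi> N rho mu \<alpha> K rL V S k) / 2"

definition fric where
  "fric \<xi> N rho mu \<alpha> V S k =
     (if \<alpha> k = \<infinity> then 0
      else real_of_ereal (\<alpha> k) / (eta \<xi> N rho mu k + real_of_ereal (\<alpha> k))\<^sup>2 * (Phi \<xi> N rho mu V S k)\<^sup>2)"

definition energy where
  "energy w N x K rho mu V S =
     (\<Sum>k=1..K. (x (Suc k) - x k) / 2 * (\<Sum>j\<le>N. w j / 2 *
        (rho k j * (V k j)\<^sup>2 + (S k j)\<^sup>2 / mu k j)))"

end

theory Submission
  imports Defs
begin

text \<open>Since the quadrature is exact in degree 2N - 1, Q + Q^T equals the boundary form
  e_{N+1} e_{N+1}^T - e_1 e_1^T (summation by parts), so the energy rate of an element only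
  involves its traces at \<xi> = -1 and \<xi> = 1. The hat states share with these traces the
  characteristic leaving the element through the face, so each face term becomes -F^2/Z plus
  the power (hat v)(hat \<sigma>) through the face. Summed over the mesh, the powers at an interface
  cancel up to the friction work -\<alpha> \<Phi>^2/(\<eta> + \<alpha>)^2, and at the two outer boundaries they
  are the reflection losses -(1 - r^2) p^2/Z.\<close>

lemma pderiv_sum: "pderiv (sum f A) = (\<Sum>x\<in>A. pderiv (f x))"
  using higher_pderiv_sum[of 1 f A] by simp

lemma degree_lagrange_le: "j \<le> N \<Longrightarrow> degree (lagrange \<xi> N j) \<le> N"
proof -
  assume "j \<le> N"
  have "degree (lagrange \<xi> N j)
      \<le> sum (degree \<circ> (\<lambda>m. smult (inverse (\<xi> j - \<xi> m)) [:- \<xi> m, 1:])) ({0..N} - {j})"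
    unfolding lagrange_def by (rule degree_prod_sum_le) simp
  also have "\<dots> \<le> (\<Sum>m\<in>{0..N} - {j}. 1)"
    by (rule sum_mono) simp
  also have "\<dots> = N" using \<open>j \<le> N\<close> by simp
  finally show ?thesis .
qed

definition nodal_poly :: "(nat \<Rightarrow> real) \<Rightarrow> nat \<Rightarrow> (nat \<Rightarrow> real) \<Rightarrow> real poly" where
  "nodal_poly \<xi> N a = (\<Sum>j\<le>N. smult (a j) (lagrange \<xi> N j))"

lemma poly_nodal_poly: "poly (nodal_poly \<xi> N a) s = nodal_eval \<xi> N a s"
  by (simp add: nodal_poly_def nodal_eval_def poly_sum)

lemma poly_pderiv_nodal_poly:
  "poly (pderiv (nodal_poly \<xi> N a)) s = (\<Sum>j\<le>N. a j * poly (pderiv (lagrange \<xi> N j)) s)"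
  by (simp add: nodal_poly_def pderiv_sum poly_sum pderiv_smult)

lemma degree_nodal_poly_le: "degree (nodal_poly \<xi> N a) \<le> N"
  unfolding nodal_poly_def
proof (rule degree_sum_le)
  fix j assume "j \<in> {..N}"
  then show "degree (smult (a j) (lagrange \<xi> N j)) \<le> N"
    by (intro order_trans[OF degree_smult_le] degree_lagrange_le) simp
qed simp

lemma Qmat_bilinear_eq_quadrature:
  "(\<Sum>i\<le>N. a i * (\<Sum>j\<le>N. Qmat \<xi> w N i j * b j))
   = (\<Sum>m\<le>N. w m * poly (nodal_poly \<xi> N a) (\<xi> m) * poly (pderiv (nodal_poly \<xi> N b)) (\<xi> m))"
proof -
  define T where "T i j m = w m * (a i * poly (lagrange \<xi> N i) (\<xi> m))
                              * (b j * poly (pderiv (lagrange \<xi> N j)) (\<xi> m))" for i j m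
  have lhs: "a i * (\<Sum>j\<le>N. Qmat \<xi> w N i j * b j) = (\<Sum>j\<le>N. \<Sum>m\<le>N. T i j m)" for i
    unfolding Qmat_def sum_distrib_left sum_distrib_right T_def
    by (intro sum.cong refl) (simp add: mult_ac)
  have rhs: "w m * poly (nodal_poly \<xi> N a) (\<xi> m) * poly (pderiv (nodal_poly \<xi> N b)) (\<xi> m)
      = (\<Sum>j\<le>N. \<Sum>i\<le>N. T i j m)" for m
    unfolding poly_pderiv_nodal_poly poly_nodal_poly nodal_eval_def
      sum_distrib_left sum_distrib_right T_def
    by (intro sum.cong refl)
  have "(\<Sum>i\<le>N. \<Sum>j\<le>N. \<Sum>m\<le>N. T i j m) = (\<Sum>i\<le>N. \<Sum>m\<le>N. \<Sum>j\<le>N. T i j m)"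
    by (rule sum.cong[OF refl], rule sum.swap)
  also have "\<dots> = (\<Sum>m\<le>N. \<Sum>i\<le>N. \<Sum>j\<le>N. T i j m)"
    by (rule sum.swap)
  also have "\<dots> = (\<Sum>m\<le>N. \<Sum>j\<le>N. \<Sum>i\<le>N. T i j m)"
    by (rule sum.cong[OF refl], rule sum.swap)
  finally show ?thesis unfolding lhs rhs .
qed

lemma Qmat_summation_by_parts:
  assumes quad_exact: "\<forall>f :: real poly. degree f \<le> 2*N - 1 \<longrightarrow>
                         (\<Sum>i\<le>N. w i * poly f (\<xi> i)) = integral {-1..1} (poly f)"
  shows "(\<Sum>i\<le>N. a i * (\<Sum>j\<le>N. Qmat \<xi> w N i j * b j))
           + (\<Sum>i\<le>N. b i * (\<Sum>j\<le>N. Qmat \<xi> w N i j * a j))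
         = nodal_eval \<xi> N a 1 * nodal_eval \<xi> N b 1
           - nodal_eval \<xi> N a (-1) * nodal_eval \<xi> N b (-1)"
proof -
  define p where "p = nodal_poly \<xi> N a * nodal_poly \<xi> N b"
  have "degree p \<le> 2*N"
    using degree_mult_le[of "nodal_poly \<xi> N a" "nodal_poly \<xi> N b"]
      degree_nodal_poly_le[of \<xi> N a] degree_nodal_poly_le[of \<xi> N b]
    unfolding p_def by linarith
  then have exact: "(\<Sum>i\<le>N. w i * poly (pderiv p) (\<xi> i)) = integral {-1..1} (poly (pderiv p))"
    using quad_exact by (simp add: degree_pderiv)
  have "(poly (pderiv p) has_integral (poly p 1 - poly p (-1))) {-1..1}"
    by (rule fundamental_theorem_of_calculus)
       (auto simp flip: has_real_derivative_iff_has_vector_derivative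
             intro!: DERIV_subset[OF poly_DERIV])
  then have ftc: "integral {-1..1} (poly (pderiv p)) = poly p 1 - poly p (-1)"
    by (rule integral_unique)
  have "(\<Sum>i\<le>N. a i * (\<Sum>j\<le>N. Qmat \<xi> w N i j * b j))
          + (\<Sum>i\<le>N. b i * (\<Sum>j\<le>N. Qmat \<xi> w N i j * a j))
        = (\<Sum>i\<le>N. w i * poly (pderiv p) (\<xi> i))"
    unfolding Qmat_bilinear_eq_quadrature sum.distrib[symmetric] p_def pderiv_mult
    by (rule sum.cong) (simp_all add: algebra_simps)
  then show ?thesis
    using exact ftc by (simp add: p_def poly_nodal_poly)
qed

text \<open>When the hat states (vh, sh) share the outgoing characteristic with the traces (v, s), the
  penalty equals Z (v - vh); this splits the face term of summation by parts into a square
  and the hat power.\<close>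

lemma left_face_flux:
  fixes Z v s vh sh :: real
  assumes "Z > 0" and "Z * vh + sh = Z * v + s"
  shows "- v * s - (Z/2 * (v - vh) - (s - sh)/2) * (v - s/Z)
         = - (Z/2 * (v - vh) - (s - sh)/2)\<^sup>2 / Z - vh * sh"
proof -
  have sh: "sh = Z * v + s - Z * vh" using assms(2) by simp
  have "Z/2 * (v - vh) - (s - sh)/2 = Z * (v - vh)" by (simp add: sh field_simps)
  then show ?thesis using assms(1) by (simp add: sh field_simps power2_eq_square)
qed

lemma right_face_flux:
  fixes Z v s vh sh :: real
  assumes "Z > 0" and "Z * vh - sh = Z * v - s"
  shows "v * s - (Z/2 * (v - vh) + (s - sh)/2) * (v + s/Z)
         = - (Z/2 * (v - vh) + (s - sh)/2)\<^sup>2 / Z + vh * sh"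
proof -
  have sh: "sh = Z * vh - Z * v + s" using assms(2) by simp
  have "Z/2 * (v - vh) + (s - sh)/2 = Z * (v - vh)" by (simp add: sh field_simps)
  then show ?thesis using assms(1) by (simp add: sh field_simps power2_eq_square)
qed

lemma element_energy_rate:
  assumes quad_exact: "\<forall>f :: real poly. degree f \<le> 2*N - 1 \<longrightarrow>
                         (\<Sum>i\<le>N. w i * poly f (\<xi> i)) = integral {-1..1} (poly f)"
    and Zl: "Zl > 0" and Zr: "Zr > 0"
    and eq_v: "\<forall>i\<le>N. c * (w i * rho i) * dv i = (\<Sum>j\<le>N. Qmat \<xi> w N i j * s j)
                 - poly (lagrange \<xi> N i) (-1) * F - poly (lagrange \<xi> N i) 1 * G"
    and eq_s: "\<forall>i\<le>N. c * (w i / mu i) * ds i = (\<Sum>j\<le>N. Qmat \<xi> w N i j * v j)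
                 + poly (lagrange \<xi> N i) (-1) * F / Zl - poly (lagrange \<xi> N i) 1 * G / Zr"
    and F: "F = Zl/2 * (nodal_eval \<xi> N v (-1) - vl) - (nodal_eval \<xi> N s (-1) - sl)/2"
    and G: "G = Zr/2 * (nodal_eval \<xi> N v 1 - vr) + (nodal_eval \<xi> N s 1 - sr)/2"
    and char_l: "Zl * vl + sl = Zl * nodal_eval \<xi> N v (-1) + nodal_eval \<xi> N s (-1)"
    and char_r: "Zr * vr - sr = Zr * nodal_eval \<xi> N v 1 - nodal_eval \<xi> N s 1"
  shows "c * (\<Sum>i\<le>N. w i * (rho i * v i * dv i + s i * ds i / mu i))
         = - F\<^sup>2 / Zl - G\<^sup>2 / Zr - vl * sl + vr * sr"
proof -
  let ?v = "nodal_eval \<xi> N v" and ?s = "nodal_eval \<xi> N s"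
  have "c * (\<Sum>i\<le>N. w i * (rho i * v i * dv i + s i * ds i / mu i))
      = (\<Sum>i\<le>N. v i * (c * (w i * rho i) * dv i)) + (\<Sum>i\<le>N. s i * (c * (w i / mu i) * ds i))"
    by (simp add: sum_distrib_left sum.distrib[symmetric] algebra_simps)
  also have "\<dots> = (\<Sum>i\<le>N. v i * ((\<Sum>j\<le>N. Qmat \<xi> w N i j * s j)
                   - poly (lagrange \<xi> N i) (-1) * F - poly (lagrange \<xi> N i) 1 * G))
                + (\<Sum>i\<le>N. s i * ((\<Sum>j\<le>N. Qmat \<xi> w N i j * v j)
                   + poly (lagrange \<xi> N i) (-1) * F / Zl - poly (lagrange \<xi> N i) 1 * G / Zr))"
    using eq_v eq_s by simp
  also have "\<dots> = ((\<Sum>i\<le>N. v i * (\<Sum>j\<le>N. Qmat \<xi> w N i j * s j))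
                  + (\<Sum>i\<le>N. s i * (\<Sum>j\<le>N. Qmat \<xi> w N i j * v j)))
                - ?v (-1) * F - ?v 1 * G + ?s (-1) * F / Zl - ?s 1 * G / Zr"
    unfolding nodal_eval_def
    by (simp add: algebra_simps sum.distrib sum_subtractf sum_distrib_left sum_distrib_right
                  sum_divide_distrib)
  also have "\<dots> = (- ?v (-1) * ?s (-1) - F * (?v (-1) - ?s (-1) / Zl))
                + (?v 1 * ?s 1 - G * (?v 1 + ?s 1 / Zr))"
    unfolding Qmat_summation_by_parts[OF quad_exact] by (simp add: algebra_simps)
  also have "\<dots> = (- F\<^sup>2 / Zl - vl * sl) + (- G\<^sup>2 / Zr + vr * sr)"
    unfolding F G using left_face_flux[OF Zl char_l] right_face_flux[OF Zr char_r] by simp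
  finally show ?thesis by simp
qed

text \<open>The identity 1/Z^- + 1/Z^+ = 1/\<eta> makes the power jump across an interface a multiple
  of \<tau> - \<Phi>, so it vanishes for a locked interface (\<tau> = \<Phi>).\<close>

lemma interface_power_jump:
  fixes Zm Zp p q \<tau> :: real
  assumes "Zm > 0" "Zp > 0"
  defines "\<eta> \<equiv> Zm * Zp / (Zm + Zp)"
  defines "\<Phi> \<equiv> \<eta> * (2/Zp * p - 2/Zm * q)"
  shows "\<tau> * ((2*q + \<tau>)/Zm - (2*p - \<tau>)/Zp) = \<tau> * (\<tau> - \<Phi>) / \<eta>"
proof -
  have "\<eta> > 0" using assms(1,2) by (simp add: \<eta>_def)
  have "1/Zm + 1/Zp = 1/\<eta>" using assms(1,2) by (simp add: \<eta>_def field_simps)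
  have "(2*q + \<tau>)/Zm - (2*p - \<tau>)/Zp = \<tau> * (1/Zm + 1/Zp) - (2/Zp*p - 2/Zm*q)"
    using assms(1,2) by (simp add: field_simps)
  also have "\<dots> = (\<tau> - \<Phi>) / \<eta>"
    using \<open>\<eta> > 0\<close> \<open>1/Zm + 1/Zp = 1/\<eta>\<close> by (simp add: \<Phi>_def diff_divide_distrib)
  finally show ?thesis by simp
qed

lemma friction_power_jump:
  fixes \<eta> \<alpha> \<Phi> :: real
  assumes "\<eta> > 0" "\<alpha> \<ge> 0"
  shows "(\<alpha> / (\<eta> + \<alpha>) * \<Phi>) * (\<alpha> / (\<eta> + \<alpha>) * \<Phi> - \<Phi>) / \<eta>
         = - (\<alpha> / (\<eta> + \<alpha>)\<^sup>2 * \<Phi>\<^sup>2)"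
proof -
  have "\<alpha> / (\<eta> + \<alpha>) * \<Phi> - \<Phi> = - (\<eta> / (\<eta> + \<alpha>) * \<Phi>)"
    using assms by (simp add: field_simps)
  then show ?thesis using assms by (simp add: power2_eq_square)
qed

lemma Zs_pos:
  "0 < nodal_eval \<xi> N (rho k) s \<Longrightarrow> 0 < nodal_eval \<xi> N (mu k) s \<Longrightarrow> 0 < Zs \<xi> N rho mu k s"
  by (simp add: Zs_def)

lemma eta_pos:
  "0 < Zs \<xi> N rho mu (k - 1) 1 \<Longrightarrow> 0 < Zs \<xi> N rho mu k (-1) \<Longrightarrow> 0 < eta \<xi> N rho mu k"
  by (simp add: eta_def)

lemma hat_left_characteristic:
  assumes "Zs \<xi> N rho mu k (-1) \<noteq> 0"
  shows "Zs \<xi> N rho mu k (-1) * v_hat_left \<xi> N rho mu \<alpha> r0 V S k + s_hat_left \<xi> N rho mu \<alpha> r0 V S k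
         = Zs \<xi> N rho mu k (-1) * nodal_eval \<xi> N (V k) (-1) + nodal_eval \<xi> N (S k) (-1)"
  using assms
  by (cases "k = 1") (simp_all add: v_hat_left_def s_hat_left_def p0_def pp_def field_simps)

lemma hat_right_characteristic:
  assumes "Zs \<xi> N rho mu k 1 \<noteq> 0"
  shows "Zs \<xi> N rho mu k 1 * v_hat_right \<xi> N rho mu \<alpha> K rL V S k - s_hat_right \<xi> N rho mu \<alpha> K rL V S k
         = Zs \<xi> N rho mu k 1 * nodal_eval \<xi> N (V k) 1 - nodal_eval \<xi> N (S k) 1"
  using assms
  by (cases "k = K") (simp_all add: v_hat_right_def s_hat_right_def qL_def qm_def field_simps)

lemma hat_power_left_boundary:
  "v_hat_left \<xi> N rho mu \<alpha> r0 V S 1 * s_hat_left \<xi> N rho mu \<alpha> r0 V S 1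
   = (1 - r0\<^sup>2) / Zs \<xi> N rho mu 1 (-1) * (p0 \<xi> N rho mu V S)\<^sup>2"
  by (simp add: v_hat_left_def s_hat_left_def power2_eq_square algebra_simps)

lemma hat_power_right_boundary:
  "v_hat_right \<xi> N rho mu \<alpha> K rL V S K * s_hat_right \<xi> N rho mu \<alpha> K rL V S K
   = - ((1 - rL\<^sup>2) / Zs \<xi> N rho mu K 1 * (qL \<xi> N rho mu K V S)\<^sup>2)"
  by (simp add: v_hat_right_def s_hat_right_def power2_eq_square algebra_simps diff_divide_distrib)

lemma hat_power_interface:
  assumes k: "2 \<le> k" "k \<le> K" and \<alpha>: "\<alpha> k \<ge> 0"
    and Zm: "0 < Zs \<xi> N rho mu (k - 1) 1" and Zp: "0 < Zs \<xi> N rho mu k (-1)"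
  shows "v_hat_right \<xi> N rho mu \<alpha> K rL V S (k - 1) * s_hat_right \<xi> N rho mu \<alpha> K rL V S (k - 1)
         - v_hat_left \<xi> N rho mu \<alpha> r0 V S k * s_hat_left \<xi> N rho mu \<alpha> r0 V S k
         = - fric \<xi> N rho mu \<alpha> V S k"
proof -
  let ?\<tau> = "sig_hat_if \<xi> N rho mu \<alpha> V S k" and ?\<eta> = "eta \<xi> N rho mu k"
    and ?\<Phi> = "Phi \<xi> N rho mu V S k"
    and ?Zm = "Zs \<xi> N rho mu (k - 1) 1" and ?Zp = "Zs \<xi> N rho mu k (-1)"
    and ?q = "qm \<xi> N rho mu V S k" and ?p = "pp \<xi> N rho mu V S k"
  have index: "k \<noteq> 1" "k - 1 \<noteq> K" "Suc (k - 1) = k" using k by auto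
  have "v_hat_right \<xi> N rho mu \<alpha> K rL V S (k - 1) * s_hat_right \<xi> N rho mu \<alpha> K rL V S (k - 1)
         - v_hat_left \<xi> N rho mu \<alpha> r0 V S k * s_hat_left \<xi> N rho mu \<alpha> r0 V S k
        = ?\<tau> * ((2 * ?q + ?\<tau>) / ?Zm - (2 * ?p - ?\<tau>) / ?Zp)"
    using index by (simp add: v_hat_right_def s_hat_right_def v_hat_left_def s_hat_left_def
                          right_diff_distrib mult_ac)
  also have "\<dots> = ?\<tau> * (?\<tau> - ?\<Phi>) / ?\<eta>"
    using interface_power_jump[OF Zm Zp] by (simp add: Phi_def eta_def)
  also have "\<dots> = - fric \<xi> N rho mu \<alpha> V S k"
  proof (cases "\<alpha> k = \<infinity>")
    case False
    have "0 \<le> real_of_ereal (\<alpha> k)" using \<alpha> by (simp add: real_of_ereal_pos)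
    with False show ?thesis
      using friction_power_jump[OF eta_pos[OF Zm Zp]]
      by (simp add: sig_hat_if_def fric_def)
  qed (simp add: sig_hat_if_def fric_def)
  finally show ?thesis .
qed

lemma fric_nonneg:
  "0 < eta \<xi> N rho mu k \<Longrightarrow> 0 \<le> \<alpha> k \<Longrightarrow> 0 \<le> fric \<xi> N rho mu \<alpha> V S k"
  by (simp add: fric_def real_of_ereal_pos)

lemma sum_faces_telescope:
  fixes f g :: "nat \<Rightarrow> 'a::ab_group_add"
  assumes "1 \<le> K"
  shows "(\<Sum>k=1..K. f k - g k) = f K - g 1 + (\<Sum>k=2..K. f (k - 1) - g k)"
proof -
  obtain n where K: "K = Suc n" using assms by (cases K) auto
  have "(\<Sum>k=2..K. f (k - 1)) = (\<Sum>k=1..n. f k)"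
    unfolding K numeral_2_eq_2 sum.shift_bounds_cl_Suc_ivl by simp
  moreover have "(\<Sum>k=1..K. f k) = (\<Sum>k=1..n. f k) + f K"
    by (simp add: K)
  moreover have "(\<Sum>k=1..K. g k) = g 1 + (\<Sum>k=2..K. g k)"
    using assms by (simp add: sum.atLeast_Suc_atMost numeral_2_eq_2)
  ultimately show ?thesis by (simp add: sum_subtractf)
qed

definition energy_rate ::
  "(nat \<Rightarrow> real) \<Rightarrow> nat \<Rightarrow> (nat \<Rightarrow> real) \<Rightarrow> nat \<Rightarrow> (nat \<Rightarrow> nat \<Rightarrow> real) \<Rightarrow> (nat \<Rightarrow> nat \<Rightarrow> real)
     \<Rightarrow> (nat \<Rightarrow> nat \<Rightarrow> real) \<Rightarrow> (nat \<Rightarrow> nat \<Rightarrow> real) \<Rightarrow> (nat \<Rightarrow> nat \<Rightarrow> real) \<Rightarrow> (nat \<Rightarrow> nat \<Rightarrow> real) \<Rightarrow> real" where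
  "energy_rate w N x K rho mu V S dV dS =
     (\<Sum>k=1..K. (x (Suc k) - x k) / 2 * (\<Sum>j\<le>N. w j *
        (rho k j * V k j * dV k j + S k j * dS k j / mu k j)))"

definition dissipation ::
  "(nat \<Rightarrow> real) \<Rightarrow> nat \<Rightarrow> (nat \<Rightarrow> nat \<Rightarrow> real) \<Rightarrow> (nat \<Rightarrow> nat \<Rightarrow> real) \<Rightarrow> (nat \<Rightarrow> ereal)
     \<Rightarrow> nat \<Rightarrow> real \<Rightarrow> real \<Rightarrow> (nat \<Rightarrow> nat \<Rightarrow> real) \<Rightarrow> (nat \<Rightarrow> nat \<Rightarrow> real) \<Rightarrow> real" where
  "dissipation \<xi> N rho mu \<alpha> K r0 rL V S =
     (\<Sum>k=1..K. (Fpen \<xi> N rho mu \<alpha> r0 V S k)\<^sup>2 / Zs \<xi> N rho mu k (-1)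
              + (Gpen \<xi> N rho mu \<alpha> K rL V S k)\<^sup>2 / Zs \<xi> N rho mu k 1)
     + (\<Sum>k=2..K. fric \<xi> N rho mu \<alpha> V S k)
     + (1 - r0\<^sup>2) / Zs \<xi> N rho mu 1 (-1) * (p0 \<xi> N rho mu V S)\<^sup>2
     + (1 - rL\<^sup>2) / Zs \<xi> N rho mu K 1 * (qL \<xi> N rho mu K V S)\<^sup>2"

lemma energy_has_real_derivative:
  assumes "\<forall>k\<in>{1..K}. \<forall>j\<le>N. ((\<lambda>s. v k j s) has_real_derivative dv k j) (at t)"
    and "\<forall>k\<in>{1..K}. \<forall>j\<le>N. ((\<lambda>s. \<sigma> k j s) has_real_derivative d\<sigma> k j) (at t)"
  shows "((\<lambda>\<tau>. energy w N x K rho mu (\<lambda>k j. v k j \<tau>) (\<lambda>k j. \<sigma> k j \<tau>)) has_real_derivative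
           energy_rate w N x K rho mu (\<lambda>k j. v k j t) (\<lambda>k j. \<sigma> k j t) dv d\<sigma>) (at t)"
  unfolding energy_def energy_rate_def
proof (intro DERIV_sum DERIV_cmult)
  fix k j assume "k \<in> {1..K}" "j \<in> {..N}"
  then have "((\<lambda>s. v k j s) has_real_derivative dv k j) (at t)"
    and "((\<lambda>s. \<sigma> k j s) has_real_derivative d\<sigma> k j) (at t)"
    using assms by auto
  then have "((\<lambda>\<tau>. w j / 2 * (rho k j * (v k j \<tau>)\<^sup>2 + (\<sigma> k j \<tau>)\<^sup>2 / mu k j)) has_real_derivative
       w j / 2 * (rho k j * (2 * v k j t * dv k j) + 2 * \<sigma> k j t * d\<sigma> k j / mu k j)) (at t)"
    by (intro DERIV_cmult DERIV_add DERIV_cdivide) (auto intro!: derivative_eq_intros)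
  then show "((\<lambda>\<tau>. w j / 2 * (rho k j * (v k j \<tau>)\<^sup>2 + (\<sigma> k j \<tau>)\<^sup>2 / mu k j)) has_real_derivative
       w j * (rho k j * v k j t * dv k j + \<sigma> k j t * d\<sigma> k j / mu k j)) (at t)"
    by (simp add: algebra_simps)
qed

lemma energy_rate_eq_neg_dissipation:
  assumes quad_exact: "\<forall>f :: real poly. degree f \<le> 2*N - 1 \<longrightarrow>
                         (\<Sum>i\<le>N. w i * poly f (\<xi> i)) = integral {-1..1} (poly f)"
    and K: "1 \<le> K"
    and Zs: "\<forall>k\<in>{1..K}. 0 < Zs \<xi> N rho mu k (-1) \<and> 0 < Zs \<xi> N rho mu k 1"
    and \<alpha>: "\<forall>k\<in>{2..K}. \<alpha> k \<ge> 0"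
    and eq_v: "\<forall>k\<in>{1..K}. \<forall>i\<le>N. (x (Suc k) - x k) / 2 * (w i * rho k i) * dV k i =
                 (\<Sum>j\<le>N. Qmat \<xi> w N i j * S k j)
                 - poly (lagrange \<xi> N i) (-1) * Fpen \<xi> N rho mu \<alpha> r0 V S k
                 - poly (lagrange \<xi> N i) 1 * Gpen \<xi> N rho mu \<alpha> K rL V S k"
    and eq_s: "\<forall>k\<in>{1..K}. \<forall>i\<le>N. (x (Suc k) - x k) / 2 * (w i / mu k i) * dS k i =
                 (\<Sum>j\<le>N. Qmat \<xi> w N i j * V k j)
                 + poly (lagrange \<xi> N i) (-1) * Fpen \<xi> N rho mu \<alpha> r0 V S k / Zs \<xi> N rho mu k (-1)
                 - poly (lagrange \<xi> N i) 1 * Gpen \<xi> N rho mu \<alpha> K rL V S k / Zs \<xi> N rho mu k 1"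
  shows "energy_rate w N x K rho mu V S dV dS = - dissipation \<xi> N rho mu \<alpha> K r0 rL V S"
proof -
  define power_r where
    "power_r k = v_hat_right \<xi> N rho mu \<alpha> K rL V S k * s_hat_right \<xi> N rho mu \<alpha> K rL V S k" for k
  define power_l where
    "power_l k = v_hat_left \<xi> N rho mu \<alpha> r0 V S k * s_hat_left \<xi> N rho mu \<alpha> r0 V S k" for k
  define penalty where "penalty k = (Fpen \<xi> N rho mu \<alpha> r0 V S k)\<^sup>2 / Zs \<xi> N rho mu k (-1)
                        + (Gpen \<xi> N rho mu \<alpha> K rL V S k)\<^sup>2 / Zs \<xi> N rho mu k 1" for k
  have "energy_rate w N x K rho mu V S dV dS = (\<Sum>k=1..K. - penalty k + (power_r k - power_l k))"
    unfolding energy_rate_def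
  proof (rule sum.cong[OF refl])
    fix k assume k: "k \<in> {1..K}"
    then have Zl: "0 < Zs \<xi> N rho mu k (-1)" and Zr: "0 < Zs \<xi> N rho mu k 1"
      using Zs by auto
    show "(x (Suc k) - x k) / 2 * (\<Sum>j\<le>N. w j * (rho k j * V k j * dV k j + S k j * dS k j / mu k j))
          = - penalty k + (power_r k - power_l k)"
      using element_energy_rate[OF quad_exact Zl Zr bspec[OF eq_v k] bspec[OF eq_s k] Fpen_def
              Gpen_def hat_left_characteristic hat_right_characteristic] Zl Zr
      by (simp add: penalty_def power_l_def power_r_def)
  qed
  also have "\<dots> = - (\<Sum>k=1..K. penalty k) + (\<Sum>k=1..K. power_r k - power_l k)"
    by (simp only: sum.distrib sum_negf)
  also have "(\<Sum>k=1..K. power_r k - power_l k)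
      = power_r K - power_l 1 + (\<Sum>k=2..K. power_r (k - 1) - power_l k)"
    by (rule sum_faces_telescope[OF K])
  also have "(\<Sum>k=2..K. power_r (k - 1) - power_l k)
      = (\<Sum>k=2..K. - fric \<xi> N rho mu \<alpha> V S k)"
  proof (rule sum.cong[OF refl])
    fix k assume k: "k \<in> {2..K}"
    then have "k - 1 \<in> {1..K}" "k \<in> {1..K}" by auto
    then show "power_r (k - 1) - power_l k = - fric \<xi> N rho mu \<alpha> V S k"
      using k Zs \<alpha> unfolding power_r_def power_l_def by (intro hat_power_interface) auto
  qed
  also have "power_r K - power_l 1
      = - ((1 - rL\<^sup>2) / Zs \<xi> N rho mu K 1 * (qL \<xi> N rho mu K V S)\<^sup>2)
        - (1 - r0\<^sup>2) / Zs \<xi> N rho mu 1 (-1) * (p0 \<xi> N rho mu V S)\<^sup>2"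
    unfolding power_r_def power_l_def hat_power_left_boundary hat_power_right_boundary by (rule refl)
  finally show ?thesis
    by (simp add: dissipation_def penalty_def sum_negf)
qed

lemma dissipation_nonneg:
  assumes "1 \<le> K"
    and Zs: "\<forall>k\<in>{1..K}. 0 < Zs \<xi> N rho mu k (-1) \<and> 0 < Zs \<xi> N rho mu k 1"
    and \<alpha>: "\<forall>k\<in>{2..K}. \<alpha> k \<ge> 0"
    and "\<bar>r0\<bar> \<le> 1" "\<bar>rL\<bar> \<le> 1"
  shows "0 \<le> dissipation \<xi> N rho mu \<alpha> K r0 rL V S"
proof -
  have "0 \<le> (\<Sum>k=1..K. (Fpen \<xi> N rho mu \<alpha> r0 V S k)\<^sup>2 / Zs \<xi> N rho mu k (-1)
                        + (Gpen \<xi> N rho mu \<alpha> K rL V S k)\<^sup>2 / Zs \<xi> N rho mu k 1)"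
    using Zs by (intro sum_nonneg) (auto intro!: add_nonneg_nonneg divide_nonneg_pos)
  moreover have "0 \<le> (\<Sum>k=2..K. fric \<xi> N rho mu \<alpha> V S k)"
  proof (rule sum_nonneg)
    fix k assume k: "k \<in> {2..K}"
    then have "k - 1 \<in> {1..K}" "k \<in> {1..K}" by auto
    then show "0 \<le> fric \<xi> N rho mu \<alpha> V S k"
      using k Zs \<alpha> by (intro fric_nonneg eta_pos) auto
  qed
  moreover have "0 \<le> (1 - r0\<^sup>2) / Zs \<xi> N rho mu 1 (-1) * (p0 \<xi> N rho mu V S)\<^sup>2"
    and "0 \<le> (1 - rL\<^sup>2) / Zs \<xi> N rho mu K 1 * (qL \<xi> N rho mu K V S)\<^sup>2"
  proof -
    have "r0\<^sup>2 \<le> 1" "rL\<^sup>2 \<le> 1" "0 < Zs \<xi> N rho mu 1 (-1)" "0 < Zs \<xi> N rho mu K 1"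
      using assms by (auto simp: abs_square_le_1)
    then show "0 \<le> (1 - r0\<^sup>2) / Zs \<xi> N rho mu 1 (-1) * (p0 \<xi> N rho mu V S)\<^sup>2"
      and "0 \<le> (1 - rL\<^sup>2) / Zs \<xi> N rho mu K 1 * (qL \<xi> N rho mu K V S)\<^sup>2"
      by (auto intro!: mult_nonneg_nonneg divide_nonneg_pos)
  qed
  ultimately show ?thesis
    unfolding dissipation_def by linarith
qed

theorem theorem2:
  fixes N K :: nat and \<xi> w x :: "nat \<Rightarrow> real" and Lc r0 rL t :: real
    and rho mu :: "nat \<Rightarrow> nat \<Rightarrow> real" and \<alpha> :: "nat \<Rightarrow> ereal"
    and v \<sigma> :: "nat \<Rightarrow> nat \<Rightarrow> real \<Rightarrow> real" and dv d\<sigma> :: "nat \<Rightarrow> nat \<Rightarrow> real"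
  assumes N1: "N \<ge> 1"
    and nodes_mono: "\<forall>i<N. \<xi> i < \<xi> (Suc i)"
    and nodes_range: "\<forall>i\<le>N. -1 \<le> \<xi> i \<and> \<xi> i \<le> 1"
    and weights_pos: "\<forall>i\<le>N. w i > 0"
    and quad_exact: "\<forall>f :: real poly. degree f \<le> 2*N - 1 \<longrightarrow>
                        (\<Sum>i\<le>N. w i * poly f (\<xi> i)) = integral {-1..1} (poly f)"
    and K1: "K \<ge> 1"
    and mesh0: "x 1 = 0" and meshL: "x (K+1) = Lc"
    and mesh_pos: "\<forall>k\<in>{1..K}. x k < x (Suc k)"
    and rho_pos: "\<forall>k\<in>{1..K}. \<forall>j\<le>N. rho k j > 0"
    and mu_pos: "\<forall>k\<in>{1..K}. \<forall>j\<le>N. mu k j > 0"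
    and rho_end: "\<forall>k\<in>{1..K}. nodal_eval \<xi> N (rho k) (-1) > 0 \<and> nodal_eval \<xi> N (rho k) 1 > 0"
    and mu_end: "\<forall>k\<in>{1..K}. nodal_eval \<xi> N (mu k) (-1) > 0 \<and> nodal_eval \<xi> N (mu k) 1 > 0"
    and r0: "-1 \<le> r0 \<and> r0 \<le> 1" and rL: "-1 \<le> rL \<and> rL \<le> 1"
    and alpha_nonneg: "\<forall>k\<in>{2..K}. \<alpha> k \<ge> 0"
    and v_deriv: "\<forall>k\<in>{1..K}. \<forall>j\<le>N. ((\<lambda>s. v k j s) has_real_derivative dv k j) (at t)"
    and \<sigma>_deriv: "\<forall>k\<in>{1..K}. \<forall>j\<le>N. ((\<lambda>s. \<sigma> k j s) has_real_derivative d\<sigma> k j) (at t)"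
    and eq_v: "\<forall>k\<in>{1..K}. \<forall>i\<le>N. (x (Suc k) - x k) / 2 * (w i * rho k i) * dv k i =
                   (\<Sum>j\<le>N. Qmat \<xi> w N i j * \<sigma> k j t)
                   - poly (lagrange \<xi> N i) (-1) * Fpen \<xi> N rho mu \<alpha> r0 (\<lambda>k j. v k j t) (\<lambda>k j. \<sigma> k j t) k
                   - poly (lagrange \<xi> N i) 1 * Gpen \<xi> N rho mu \<alpha> K rL (\<lambda>k j. v k j t) (\<lambda>k j. \<sigma> k j t) k"
    and eq_\<sigma>: "\<forall>k\<in>{1..K}. \<forall>i\<le>N. (x (Suc k) - x k) / 2 * (w i / mu k i) * d\<sigma> k i =
                   (\<Sum>j\<le>N. Qmat \<xi> w N i j * v k j t)
                   + poly (lagrange \<xi> N i) (-1) * Fpen \<xi> N rho mu \<alpha> r0 (\<lambda>k j. v k j t) (\<lambda>k j. \<sigma> k j t) k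
                       / Zs \<xi> N rho mu k (-1)
                   - poly (lagrange \<xi> N i) 1 * Gpen \<xi> N rho mu \<alpha> K rL (\<lambda>k j. v k j t) (\<lambda>k j. \<sigma> k j t) k
                       / Zs \<xi> N rho mu k 1"
  shows "((\<lambda>\<tau>. energy w N x K rho mu (\<lambda>k j. v k j \<tau>) (\<lambda>k j. \<sigma> k j \<tau>)) has_real_derivative
           (let V = (\<lambda>k j. v k j t); S = (\<lambda>k j. \<sigma> k j t) in
            - (\<Sum>k=1..K. (Fpen \<xi> N rho mu \<alpha> r0 V S k)\<^sup>2 / Zs \<xi> N rho mu k (-1)
                        + (Gpen \<xi> N rho mu \<alpha> K rL V S k)\<^sup>2 / Zs \<xi> N rho mu k 1)
            - (\<Sum>k=2..K. fric \<xi> N rho mu \<alpha> V S k)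
            - (1 - r0\<^sup>2) / Zs \<xi> N rho mu 1 (-1) * (p0 \<xi> N rho mu V S)\<^sup>2
            - (1 - rL\<^sup>2) / Zs \<xi> N rho mu K 1 * (qL \<xi> N rho mu K V S)\<^sup>2)) (at t)
       \<and> (let V = (\<lambda>k j. v k j t); S = (\<lambda>k j. \<sigma> k j t) in
            - (\<Sum>k=1..K. (Fpen \<xi> N rho mu \<alpha> r0 V S k)\<^sup>2 / Zs \<xi> N rho mu k (-1)
                        + (Gpen \<xi> N rho mu \<alpha> K rL V S k)\<^sup>2 / Zs \<xi> N rho mu k 1)
            - (\<Sum>k=2..K. fric \<xi> N rho mu \<alpha> V S k)
            - (1 - r0\<^sup>2) / Zs \<xi> N rho mu 1 (-1) * (p0 \<xi> N rho mu V S)\<^sup>2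
            - (1 - rL\<^sup>2) / Zs \<xi> N rho mu K 1 * (qL \<xi> N rho mu K V S)\<^sup>2) \<le> 0"
proof -
  have Zs: "\<forall>k\<in>{1..K}. 0 < Zs \<xi> N rho mu k (-1) \<and> 0 < Zs \<xi> N rho mu k 1"
    using rho_end mu_end by (simp add: Zs_pos)
  note rate = energy_rate_eq_neg_dissipation[OF quad_exact K1 Zs alpha_nonneg eq_v eq_\<sigma>]
  have nonneg: "0 \<le> dissipation \<xi> N rho mu \<alpha> K r0 rL (\<lambda>k j. v k j t) (\<lambda>k j. \<sigma> k j t)"
    using K1 Zs alpha_nonneg r0 rL by (intro dissipation_nonneg) (auto simp: abs_le_iff)
  have let_eq: "(let V = (\<lambda>k j. v k j t); S = (\<lambda>k j. \<sigma> k j t) in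
            - (\<Sum>k=1..K. (Fpen \<xi> N rho mu \<alpha> r0 V S k)\<^sup>2 / Zs \<xi> N rho mu k (-1)
                        + (Gpen \<xi> N rho mu \<alpha> K rL V S k)\<^sup>2 / Zs \<xi> N rho mu k 1)
            - (\<Sum>k=2..K. fric \<xi> N rho mu \<alpha> V S k)
            - (1 - r0\<^sup>2) / Zs \<xi> N rho mu 1 (-1) * (p0 \<xi> N rho mu V S)\<^sup>2
            - (1 - rL\<^sup>2) / Zs \<xi> N rho mu K 1 * (qL \<xi> N rho mu K V S)\<^sup>2)
      = - dissipation \<xi> N rho mu \<alpha> K r0 rL (\<lambda>k j. v k j t) (\<lambda>k j. \<sigma> k j t)"
    unfolding Let_def dissipation_def by (simp only: minus_add_distrib diff_conv_add_uminus)
  have deriv: "((\<lambda>\<tau>. energy w N x K rho mu (\<lambda>k j. v k j \<tau>) (\<lambda>k j. \<sigma> k j \<tau>)) has_real_derivative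
      - dissipation \<xi> N rho mu \<alpha> K r0 rL (\<lambda>k j. v k j t) (\<lambda>k j. \<sigma> k j t)) (at t)"
    using energy_has_real_derivative[OF v_deriv \<sigma>_deriv, where w = w and x = x and rho = rho
            and mu = mu]
    unfolding rate .
  show ?thesis
    unfolding let_eq using deriv nonneg by (intro conjI) auto
qed

end
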